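(* Let $\phi$ be a smooth function on an open subset of the $x$-$y$ plane such that $X(x,y)=(x,y,\phi(x,y))$ is a timelike minimal surface in $\mathbb{L}^3$ without singularities. Then, locally (near each point), $X$ can be written as a graph of the form $(x,\psi(x,z),z)$ or of the form $(\psi(y,z),y,z)$, where $\psi$ is a Born-Infeld soliton (in the variables $(x,z)$, respectively $(y,z)$).
   Context: $\mathbb{L}^3$ denotes $\mathbb{R}^3$ with the Lorentzian metric $ds^2=dx^2+dy^2-dz^2$. A surface is timelike if its induced metric is Lorentzian (equivalently, its unit normal is spacelike), and minimal if its mean curvature vanishes; "without singularities" means the map is an immersion whose induced metric is nondegenerate (timelike) everywhere. A function $\psi$ defined on an open set $\Omega$ of the $(u,v)$-plane is a Born-Infeld soliton (in the variables $u,v$) if it satisfies the Born-Infeld equation $(1-\psi_v^2)\psi_{uu}+2\psi_u\psi_v\psi_{uv}-(1+\psi_u^2)\psi_{vv}=0$. *)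

theory Defs
  imports "HOL-Analysis.Analysis"
begin

definition lip :: "real \<times> real \<times> real \<Rightarrow> real \<times> real \<times> real \<Rightarrow> real" where
  "lip a b = fst a * fst b + fst (snd a) * fst (snd b) - snd (snd a) * snd (snd b)"

text \<open>Lorentzian cross product: lip (lcross a b) w = det(a,b,w); it is normal to a and b.\<close>
definition lcross :: "real \<times> real \<times> real \<Rightarrow> real \<times> real \<times> real \<Rightarrow> real \<times> real \<times> real" where
  "lcross a b =
     (fst (snd a) * snd (snd b) - snd (snd a) * fst (snd b),
      snd (snd a) * fst b - fst a * snd (snd b),
      - (fst a * fst (snd b) - fst (snd a) * fst b))"

definition pd1 :: "(real \<times> real \<Rightarrow> 'a::real_normed_vector) \<Rightarrow> real \<times> real \<Rightarrow> 'a" where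
  "pd1 f p = vector_derivative (\<lambda>t. f (t, snd p)) (at (fst p))"

definition pd2 :: "(real \<times> real \<Rightarrow> 'a::real_normed_vector) \<Rightarrow> real \<times> real \<Rightarrow> 'a" where
  "pd2 f p = vector_derivative (\<lambda>t. f (fst p, t)) (at (snd p))"

fun pd_iter :: "bool list \<Rightarrow> (real \<times> real \<Rightarrow> real) \<Rightarrow> real \<times> real \<Rightarrow> real" where
  "pd_iter [] f = f"
| "pd_iter (b # bs) f = (if b then pd1 else pd2) (pd_iter bs f)"

text \<open>Smooth (C-infinity) on an open set: every iterated partial derivative exists and is
  (Frechet) differentiable, hence continuous, on the set.\<close>
definition smooth_on :: "(real \<times> real) set \<Rightarrow> (real \<times> real \<Rightarrow> real) \<Rightarrow> bool" where
  "smooth_on \<Omega> f \<longleftrightarrow> (\<forall>bs. pd_iter bs f differentiable_on \<Omega>)"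

definition fundE where "fundE X p = lip (pd1 X p) (pd1 X p)"
definition fundF where "fundF X p = lip (pd1 X p) (pd2 X p)"
definition fundG where "fundG X p = lip (pd2 X p) (pd2 X p)"

definition unit_normal :: "(real \<times> real \<Rightarrow> real \<times> real \<times> real) \<Rightarrow> real \<times> real \<Rightarrow> real \<times> real \<times> real" where
  "unit_normal X p = (let n = lcross (pd1 X p) (pd2 X p) in (1 / sqrt \<bar>lip n n\<bar>) *\<^sub>R n)"

definition fundL where "fundL X p = lip (pd1 (pd1 X) p) (unit_normal X p)"
definition fundM where "fundM X p = lip (pd2 (pd1 X) p) (unit_normal X p)"
definition fundN where "fundN X p = lip (pd2 (pd2 X) p) (unit_normal X p)"

definition mean_curvature :: "(real \<times> real \<Rightarrow> real \<times> real \<times> real) \<Rightarrow> real \<times> real \<Rightarrow> real" where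
  "mean_curvature X p =
     (fundE X p * fundN X p - 2 * fundF X p * fundM X p + fundG X p * fundL X p)
     / (2 * (fundE X p * fundG X p - (fundF X p)\<^sup>2))"

text \<open>Timelike without singularities: the induced metric is Lorentzian (negative
  determinant) at every point, in particular nondegenerate.\<close>
definition timelike_on :: "(real \<times> real) set \<Rightarrow> (real \<times> real \<Rightarrow> real \<times> real \<times> real) \<Rightarrow> bool" where
  "timelike_on \<Omega> X \<longleftrightarrow> (\<forall>p\<in>\<Omega>. fundE X p * fundG X p - (fundF X p)\<^sup>2 < 0)"

definition minimal_on :: "(real \<times> real) set \<Rightarrow> (real \<times> real \<Rightarrow> real \<times> real \<times> real) \<Rightarrow> bool" where
  "minimal_on \<Omega> X \<longleftrightarrow> (\<forall>p\<in>\<Omega>. mean_curvature X p = 0)"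

definition born_infeld_on :: "(real \<times> real) set \<Rightarrow> (real \<times> real \<Rightarrow> real) \<Rightarrow> bool" where
  "born_infeld_on \<Omega> \<psi> \<longleftrightarrow> (\<forall>p\<in>\<Omega>.
     (1 - (pd2 \<psi> p)\<^sup>2) * pd1 (pd1 \<psi>) p + 2 * pd1 \<psi> p * pd2 \<psi> p * pd2 (pd1 \<psi>) p
     - (1 + (pd1 \<psi> p)\<^sup>2) * pd2 (pd2 \<psi>) p = 0)"

end

theory Submission
  imports Defs
begin

(* A timelike graph z = phi(x, y) has |grad phi| > 1, so phi_x or phi_y is nonzero at each point;
   after exchanging x and y we may assume phi_y <> 0.  On a small ball the map
   (x, y) -> (x, phi(x, y)) is then injective (mean value theorem in y), hence a homeomorphism onto
   an open set by invariance of domain, and its inverse has the form (x, z) -> (x, psi(x, z)): the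
   surface is the graph y = psi(x, z).  The inverse function rule gives psi_x = -phi_x / phi_y and
   psi_z = 1 / phi_y.  These are smooth functions of the point, which bootstraps the smoothness of
   psi, and differentiating once more shows that the Born-Infeld expression of psi is the zero
   mean curvature expression of phi divided by phi_y^3. *)

lemma pd_eq_derivative:
  assumes "(f has_derivative D) (at q)"
  shows "pd1 f q = D (1, 0)" "pd2 f q = D (0, 1)"
proof -
  have "((\<lambda>t. (t, snd q)) has_vector_derivative (1, 0)) (at (fst q))"
    "((\<lambda>t. (fst q, t)) has_vector_derivative (0, 1)) (at (snd q))"
    by (auto intro!: derivative_eq_intros simp: has_vector_derivative_def)
  then have "((\<lambda>t. f (t, snd q)) has_vector_derivative D (1, 0)) (at (fst q))"
    "((\<lambda>t. f (fst q, t)) has_vector_derivative D (0, 1)) (at (snd q))"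
    using vector_derivative_diff_chain_within[of _ _ _ UNIV f D] assms
    by (auto simp: o_def has_derivative_at_withinI)
  then show "pd1 f q = D (1, 0)" "pd2 f q = D (0, 1)"
    unfolding pd1_def pd2_def by (auto intro: vector_derivative_at)
qed

lemma has_derivative_partials:
  fixes f :: "real \<times> real \<Rightarrow> real"
  assumes "f differentiable (at q)"
  shows "(f has_derivative (\<lambda>h. fst h * pd1 f q + snd h * pd2 f q)) (at q)"
proof -
  obtain D where D: "(f has_derivative D) (at q)" using assms differentiable_def by blast
  interpret linear D using D has_derivative_linear by blast
  have "D (a, b) = a * D (1, 0) + b * D (0, 1)" for a b
    using add[of "(a, 0)" "(0, b)"] scale[of a "(1, 0)"] scale[of b "(0, 1)"] by simp
  then have "D = (\<lambda>h. fst h * D (1, 0) + snd h * D (0, 1))"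
    by (metis prod.collapse)
  with D show ?thesis by (simp add: pd_eq_derivative[OF D])
qed

lemma pd1_cong:
  assumes "open S" "q \<in> S" "\<And>z. z \<in> S \<Longrightarrow> f z = g z"
  shows "pd1 f q = pd1 g q"
proof -
  have "open ((\<lambda>t. (t, snd q)) -` S)"
    by (rule continuous_open_vimage[OF assms(1)]) (auto intro!: continuous_intros)
  then have ev: "eventually (\<lambda>t. f (t, snd q) = g (t, snd q)) (nhds (fst q))"
    using assms(2,3) by (auto simp: eventually_nhds)
  show ?thesis
    unfolding pd1_def using vector_derivative_cong_eq[where A=UNIV and B=UNIV, simplified, OF ev refl] .
qed

lemma pd2_cong:
  assumes "open S" "q \<in> S" "\<And>z. z \<in> S \<Longrightarrow> f z = g z"
  shows "pd2 f q = pd2 g q"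
proof -
  have "open ((\<lambda>t. (fst q, t)) -` S)"
    by (rule continuous_open_vimage[OF assms(1)]) (auto intro!: continuous_intros)
  then have ev: "eventually (\<lambda>t. f (fst q, t) = g (fst q, t)) (nhds (snd q))"
    using assms(2,3) by (auto simp: eventually_nhds)
  show ?thesis
    unfolding pd2_def using vector_derivative_cong_eq[where A=UNIV and B=UNIV, simplified, OF ev refl] .
qed

lemma pd_iter_cong:
  assumes "open S" "\<And>z. z \<in> S \<Longrightarrow> f z = g z" "q \<in> S"
  shows "pd_iter bs f q = pd_iter bs g q"
  using assms(3)
proof (induction bs arbitrary: q)
  case Nil
  then show ?case using assms(2) by simp
next
  case (Cons b bs)
  then show ?case
    using pd1_cong[OF assms(1) Cons.prems Cons.IH] pd2_cong[OF assms(1) Cons.prems Cons.IH] by simp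
qed

lemma pd1_swap: "pd1 (\<lambda>z. f (prod.swap z)) = (\<lambda>z. pd2 f (prod.swap z))"
  and pd2_swap: "pd2 (\<lambda>z. f (prod.swap z)) = (\<lambda>z. pd1 f (prod.swap z))"
  by (simp_all add: pd1_def pd2_def fun_eq_iff)

lemma pd_iter_swap: "pd_iter bs (\<lambda>z. f (prod.swap z)) = (\<lambda>z. pd_iter (map Not bs) f (prod.swap z))"
proof (induction bs)
  case (Cons b bs)
  then show ?case by (cases b) (simp_all add: pd1_swap pd2_swap)
qed simp

lemma differentiable_swap:
  fixes f :: "real \<times> real \<Rightarrow> real"
  assumes "f differentiable at (prod.swap z)"
  shows "(\<lambda>z. f (prod.swap z)) differentiable at z"
proof -
  have "bounded_linear (prod.swap :: real \<times> real \<Rightarrow> real \<times> real)"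
    using bounded_linear_Pair[OF bounded_linear_snd bounded_linear_fst] by (simp add: prod.swap_def[abs_def])
  then show ?thesis
    using differentiable_chain_at[of prod.swap z f] assms by (simp add: bounded_linear_imp_differentiable o_def)
qed

lemma pd1_has_real_derivative:
  fixes f :: "real \<times> real \<Rightarrow> real"
  assumes "f differentiable at (s, t)"
  shows "((\<lambda>s. f (s, t)) has_real_derivative pd1 f (s, t)) (at s)"
proof -
  have "((\<lambda>s. (s, t)) has_derivative (\<lambda>h. (h, 0))) (at s)"
    by (auto intro!: derivative_eq_intros)
  from has_derivative_compose[OF this has_derivative_partials[OF assms]]
  show ?thesis by (simp add: has_field_derivative_def mult_commute_abs)
qed

lemma pd2_has_real_derivative:
  fixes f :: "real \<times> real \<Rightarrow> real"
  assumes "f differentiable at (s, t)"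
  shows "((\<lambda>t. f (s, t)) has_real_derivative pd2 f (s, t)) (at t)"
  using pd1_has_real_derivative[of "\<lambda>z. f (prod.swap z)" t s] differentiable_swap[of f "(t, s)"] assms
  by (simp add: pd1_swap)

definition partials_differentiable_on :: "(real \<times> real) set \<Rightarrow> nat \<Rightarrow> (real \<times> real \<Rightarrow> real) \<Rightarrow> bool"
  where "partials_differentiable_on S n f \<longleftrightarrow> (\<forall>bs. length bs \<le> n \<longrightarrow> pd_iter bs f differentiable_on S)"

lemma smooth_on_iff_partials_differentiable_on:
  "smooth_on S f \<longleftrightarrow> (\<forall>n. partials_differentiable_on S n f)"
  unfolding smooth_on_def partials_differentiable_on_def by auto

lemma partials_differentiable_on_0 [simp]:
  "partials_differentiable_on S 0 f \<longleftrightarrow> f differentiable_on S"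
  unfolding partials_differentiable_on_def by auto

lemma pd_iter_snoc: "pd_iter (bs @ [b]) f = pd_iter bs ((if b then pd1 else pd2) f)"
  by (induction bs) auto

lemma partials_differentiable_on_Suc:
  "partials_differentiable_on S (Suc n) f \<longleftrightarrow>
     f differentiable_on S \<and> partials_differentiable_on S n (pd1 f) \<and> partials_differentiable_on S n (pd2 f)"
proof -
  have "(\<forall>bs. length bs \<le> Suc n \<longrightarrow> P bs) \<longleftrightarrow> P [] \<and> (\<forall>b bs. length bs \<le> n \<longrightarrow> P (bs @ [b]))"
    for P :: "bool list \<Rightarrow> bool"
  proof
    assume *: "P [] \<and> (\<forall>b bs. length bs \<le> n \<longrightarrow> P (bs @ [b]))"
    show "\<forall>bs. length bs \<le> Suc n \<longrightarrow> P bs"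
    proof (intro allI impI)
      fix bs :: "bool list" assume "length bs \<le> Suc n"
      with * show "P bs" by (cases bs rule: rev_cases) auto
    qed
  qed auto
  from this[of "\<lambda>bs. pd_iter bs f differentiable_on S"] show ?thesis
    unfolding partials_differentiable_on_def pd_iter_snoc all_bool_eq by simp
qed

lemma partials_differentiable_on_mono:
  "partials_differentiable_on S n f \<Longrightarrow> m \<le> n \<Longrightarrow> partials_differentiable_on S m f"
  unfolding partials_differentiable_on_def by auto

lemma partials_differentiable_on_imp_differentiable_at:
  assumes "open S" "partials_differentiable_on S n f" "x \<in> S"
  shows "f differentiable at x"
  using partials_differentiable_on_mono[OF assms(2) le0] assms(1,3)
  by (simp add: differentiable_on_eq_differentiable_at)

lemma differentiable_on_cong:
  assumes "\<And>x. x \<in> S \<Longrightarrow> f x = g x" "g differentiable_on S"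
  shows "f differentiable_on S"
  unfolding differentiable_on_def
proof
  fix x assume "x \<in> S"
  with assms(2) have "g differentiable (at x within S)" unfolding differentiable_on_def by blast
  then show "f differentiable (at x within S)"
    by (rule differentiable_transform_within[OF _ zero_less_one \<open>x \<in> S\<close>]) (simp add: assms(1))
qed

lemma partials_differentiable_on_cong:
  assumes "open S" "\<And>x. x \<in> S \<Longrightarrow> f x = g x" "partials_differentiable_on S n g"
  shows "partials_differentiable_on S n f"
  unfolding partials_differentiable_on_def
proof (intro allI impI)
  fix bs :: "bool list" assume "length bs \<le> n"
  then have "pd_iter bs g differentiable_on S"
    using assms(3) unfolding partials_differentiable_on_def by simp
  moreover have "pd_iter bs f x = pd_iter bs g x" if "x \<in> S" for x
    using pd_iter_cong[OF assms(1,2) that] .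
  ultimately show "pd_iter bs f differentiable_on S"
    by (rule differentiable_on_cong[rotated])
qed

lemma partials_differentiable_on_SucI:
  assumes "open S" "f differentiable_on S"
    and "partials_differentiable_on S n fx" "\<And>x. x \<in> S \<Longrightarrow> pd1 f x = fx x"
    and "partials_differentiable_on S n fy" "\<And>x. x \<in> S \<Longrightarrow> pd2 f x = fy x"
  shows "partials_differentiable_on S (Suc n) f"
  unfolding partials_differentiable_on_Suc
  by (intro conjI assms(2) partials_differentiable_on_cong[OF assms(1) assms(4,3)]
      partials_differentiable_on_cong[OF assms(1) assms(6,5)])

lemma pd_const [simp]: "pd1 (\<lambda>_. c) = (\<lambda>_. 0)" "pd2 (\<lambda>_. c) = (\<lambda>_. 0)"
  using pd_eq_derivative[of "\<lambda>_. c" "\<lambda>_. 0"] by auto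

lemma pd_snd [simp]: "pd1 snd = (\<lambda>_. 0)" "pd2 snd = (\<lambda>_. 1)"
  using pd_eq_derivative[OF bounded_linear_imp_has_derivative[OF bounded_linear_snd]] by auto

lemma partials_differentiable_on_const: "partials_differentiable_on S n (\<lambda>_. c)"
proof (induction n arbitrary: c)
  case (Suc n)
  then show ?case by (simp add: partials_differentiable_on_Suc)
qed simp

lemma partials_differentiable_on_snd: "partials_differentiable_on S n snd"
  by (cases n) (simp_all add: partials_differentiable_on_Suc partials_differentiable_on_const
      bounded_linear_imp_differentiable_on bounded_linear_snd)

lemma pd_add:
  fixes f g :: "real \<times> real \<Rightarrow> real"
  assumes "f differentiable at q" "g differentiable at q"
  shows "pd1 (\<lambda>x. f x + g x) q = pd1 f q + pd1 g q" "pd2 (\<lambda>x. f x + g x) q = pd2 f q + pd2 g q"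
  using pd_eq_derivative[OF has_derivative_add[OF has_derivative_partials[OF assms(1)]
        has_derivative_partials[OF assms(2)]]]
  by auto

lemma pd_mult:
  fixes f g :: "real \<times> real \<Rightarrow> real"
  assumes "f differentiable at q" "g differentiable at q"
  shows "pd1 (\<lambda>x. f x * g x) q = pd1 f q * g q + f q * pd1 g q"
    "pd2 (\<lambda>x. f x * g x) q = pd2 f q * g q + f q * pd2 g q"
  using pd_eq_derivative[OF has_derivative_mult[OF has_derivative_partials[OF assms(1)]
        has_derivative_partials[OF assms(2)]]]
  by (auto simp: algebra_simps)

lemma pd_inverse:
  fixes f :: "real \<times> real \<Rightarrow> real"
  assumes "f differentiable at q" "f q \<noteq> 0"
  shows "pd1 (\<lambda>x. inverse (f x)) q = - pd1 f q * (inverse (f q) * inverse (f q))"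
    "pd2 (\<lambda>x. inverse (f x)) q = - pd2 f q * (inverse (f q) * inverse (f q))"
  using pd_eq_derivative[OF Deriv.has_derivative_inverse[OF assms(2) has_derivative_partials[OF assms(1)]]]
  by (auto simp: algebra_simps)

lemma pd_uminus:
  fixes f :: "real \<times> real \<Rightarrow> real"
  assumes "f differentiable at q"
  shows "pd1 (\<lambda>x. - f x) q = - pd1 f q" "pd2 (\<lambda>x. - f x) q = - pd2 f q"
  using pd_eq_derivative[OF has_derivative_minus[OF has_derivative_partials[OF assms]]]
  by simp_all

lemma pd_divide:
  fixes f g :: "real \<times> real \<Rightarrow> real"
  assumes "f differentiable at q" "g differentiable at q" "g q \<noteq> 0"
  shows "pd1 (\<lambda>x. f x / g x) q = (pd1 f q * g q - f q * pd1 g q) / (g q)\<^sup>2"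
    "pd2 (\<lambda>x. f x / g x) q = (pd2 f q * g q - f q * pd2 g q) / (g q)\<^sup>2"
  using pd_eq_derivative[OF has_derivative_divide[OF has_derivative_partials[OF assms(1)]
        has_derivative_partials[OF assms(2)] assms(3)]] assms(3)
  by (simp_all add: field_simps power2_eq_square)

lemma partials_differentiable_on_add:
  assumes "open S" shows "partials_differentiable_on S n f \<Longrightarrow> partials_differentiable_on S n g
    \<Longrightarrow> partials_differentiable_on S n (\<lambda>x. f x + g x)"
proof (induction n arbitrary: f g)
  case 0
  then show ?case by (simp add: differentiable_on_add)
next
  case (Suc n)
  have f: "f differentiable_on S" "partials_differentiable_on S n (pd1 f)" "partials_differentiable_on S n (pd2 f)"
    and g: "g differentiable_on S" "partials_differentiable_on S n (pd1 g)" "partials_differentiable_on S n (pd2 g)"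
    using Suc.prems partials_differentiable_on_Suc by blast+
  have d: "f differentiable at x" "g differentiable at x" if "x \<in> S" for x
    using f(1) g(1) that differentiable_on_eq_differentiable_at[OF assms(1)] by blast+
  show ?case
  proof (rule partials_differentiable_on_SucI[
        where fx="\<lambda>x. pd1 f x + pd1 g x" and fy="\<lambda>x. pd2 f x + pd2 g x", OF assms(1)])
    show "(\<lambda>x. f x + g x) differentiable_on S"
      using f(1) g(1) by (rule differentiable_on_add)
    show "partials_differentiable_on S n (\<lambda>x. pd1 f x + pd1 g x)"
      "partials_differentiable_on S n (\<lambda>x. pd2 f x + pd2 g x)"
      by (intro Suc.IH f g)+
  next
    fix x assume "x \<in> S"
    from pd_add[OF d[OF this]]
    show "pd1 (\<lambda>x. f x + g x) x = pd1 f x + pd1 g x"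
      and "pd2 (\<lambda>x. f x + g x) x = pd2 f x + pd2 g x" .
  qed
qed

lemma partials_differentiable_on_mult:
  assumes "open S" shows "partials_differentiable_on S n f \<Longrightarrow> partials_differentiable_on S n g
    \<Longrightarrow> partials_differentiable_on S n (\<lambda>x. f x * g x)"
proof (induction n arbitrary: f g)
  case 0
  then show ?case by (simp add: differentiable_on_mult)
next
  case (Suc n)
  have f: "f differentiable_on S" "partials_differentiable_on S n f"
    "partials_differentiable_on S n (pd1 f)" "partials_differentiable_on S n (pd2 f)"
    using Suc.prems(1) partials_differentiable_on_mono[OF Suc.prems(1), of n]
    unfolding partials_differentiable_on_Suc by simp_all
  have g: "g differentiable_on S" "partials_differentiable_on S n g"
    "partials_differentiable_on S n (pd1 g)" "partials_differentiable_on S n (pd2 g)"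
    using Suc.prems(2) partials_differentiable_on_mono[OF Suc.prems(2), of n]
    unfolding partials_differentiable_on_Suc by simp_all
  have d: "f differentiable at x" "g differentiable at x" if "x \<in> S" for x
    using f(1) g(1) that differentiable_on_eq_differentiable_at[OF assms(1)] by blast+
  show ?case
  proof (rule partials_differentiable_on_SucI[
        where fx="\<lambda>x. pd1 f x * g x + f x * pd1 g x"
          and fy="\<lambda>x. pd2 f x * g x + f x * pd2 g x", OF assms(1)])
    show "(\<lambda>x. f x * g x) differentiable_on S"
      using f(1) g(1) by (rule differentiable_on_mult)
    show "partials_differentiable_on S n (\<lambda>x. pd1 f x * g x + f x * pd1 g x)"
      "partials_differentiable_on S n (\<lambda>x. pd2 f x * g x + f x * pd2 g x)"
      by (intro partials_differentiable_on_add[OF assms(1)] Suc.IH f g)+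
  next
    fix x assume "x \<in> S"
    from pd_mult[OF d[OF this]]
    show "pd1 (\<lambda>x. f x * g x) x = pd1 f x * g x + f x * pd1 g x"
      and "pd2 (\<lambda>x. f x * g x) x = pd2 f x * g x + f x * pd2 g x" .
  qed
qed

lemma partials_differentiable_on_uminus:
  assumes "open S" "partials_differentiable_on S n f"
  shows "partials_differentiable_on S n (\<lambda>x. - f x)"
  using partials_differentiable_on_mult[OF assms(1) partials_differentiable_on_const[of S n "-1"] assms(2)]
  by simp

lemma partials_differentiable_on_inverse:
  assumes "open S" "\<And>x. x \<in> S \<Longrightarrow> f x \<noteq> 0"
  shows "partials_differentiable_on S n f \<Longrightarrow> partials_differentiable_on S n (\<lambda>x. inverse (f x))"
proof (induction n)
  case 0
  then show ?case using assms(2) by (simp add: differentiable_on_inverse)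
next
  case (Suc n)
  have f: "f differentiable_on S" "partials_differentiable_on S n (pd1 f)"
    "partials_differentiable_on S n (pd2 f)"
    using Suc.prems partials_differentiable_on_Suc by auto
  have "partials_differentiable_on S n (\<lambda>x. inverse (f x))"
    using Suc partials_differentiable_on_mono[OF Suc.prems, of n] by simp
  then have sq: "partials_differentiable_on S n (\<lambda>x. inverse (f x) * inverse (f x))"
    using partials_differentiable_on_mult[OF assms(1)] by blast
  have df: "f differentiable at x" if "x \<in> S" for x
    using f(1) that differentiable_on_eq_differentiable_at[OF assms(1)] by blast
  show ?case
  proof (rule partials_differentiable_on_SucI[
        where fx="\<lambda>x. - pd1 f x * (inverse (f x) * inverse (f x))"
          and fy="\<lambda>x. - pd2 f x * (inverse (f x) * inverse (f x))", OF assms(1)])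
    show "(\<lambda>x. inverse (f x)) differentiable_on S"
      using f(1) assms(2) by (simp add: differentiable_on_inverse)
    show "partials_differentiable_on S n (\<lambda>x. - pd1 f x * (inverse (f x) * inverse (f x)))"
      "partials_differentiable_on S n (\<lambda>x. - pd2 f x * (inverse (f x) * inverse (f x)))"
      using partials_differentiable_on_mult[OF assms(1) partials_differentiable_on_uminus[OF assms(1)] sq] f
      by blast+
  next
    fix x assume "x \<in> S"
    from pd_inverse[OF df assms(2), OF this this]
    show "pd1 (\<lambda>x. inverse (f x)) x = - pd1 f x * (inverse (f x) * inverse (f x))"
      and "pd2 (\<lambda>x. inverse (f x)) x = - pd2 f x * (inverse (f x) * inverse (f x))" .
  qed
qed

lemma smooth_on_const: "smooth_on S (\<lambda>_. c)"
  by (simp add: smooth_on_iff_partials_differentiable_on partials_differentiable_on_const)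

lemma smooth_on_subset: "smooth_on S f \<Longrightarrow> T \<subseteq> S \<Longrightarrow> smooth_on T f"
  unfolding smooth_on_def using differentiable_on_subset by blast

lemma smooth_on_pd1: "smooth_on S f \<Longrightarrow> smooth_on S (pd1 f)"
  and smooth_on_pd2: "smooth_on S f \<Longrightarrow> smooth_on S (pd2 f)"
  unfolding smooth_on_iff_partials_differentiable_on
  by (metis partials_differentiable_on_Suc)+

lemma smooth_on_uminus: "open S \<Longrightarrow> smooth_on S f \<Longrightarrow> smooth_on S (\<lambda>x. - f x)"
  by (simp add: smooth_on_iff_partials_differentiable_on partials_differentiable_on_uminus)

lemma smooth_on_divide:
  assumes "open S" "smooth_on S f" "smooth_on S g" "\<And>x. x \<in> S \<Longrightarrow> g x \<noteq> 0"
  shows "smooth_on S (\<lambda>x. f x / g x)"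
  unfolding smooth_on_iff_partials_differentiable_on divide_inverse
proof
  fix n
  from assms(2,3) have "partials_differentiable_on S n f" "partials_differentiable_on S n g"
    unfolding smooth_on_iff_partials_differentiable_on by simp_all
  then show "partials_differentiable_on S n (\<lambda>x. f x * inverse (g x))"
    by (intro partials_differentiable_on_mult[OF assms(1)] partials_differentiable_on_inverse[OF assms(1,4)])
qed

lemma pd_comp_columns:
  fixes Q :: "real \<times> real \<Rightarrow> real" and g :: "real \<times> real \<Rightarrow> real \<times> real"
  assumes "Q differentiable at (g w)" "(g has_derivative (\<lambda>k. fst k *\<^sub>R a + snd k *\<^sub>R b)) (at w)"
  shows "pd1 (\<lambda>w. Q (g w)) w = pd1 Q (g w) * fst a + pd2 Q (g w) * snd a"
    "pd2 (\<lambda>w. Q (g w)) w = pd1 Q (g w) * fst b + pd2 Q (g w) * snd b"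
  using pd_eq_derivative[OF has_derivative_compose[OF assms(2) has_derivative_partials[OF assms(1)]]]
  by (simp_all add: mult.commute)

lemma partials_differentiable_on_comp:
  fixes g a b :: "real \<times> real \<Rightarrow> real \<times> real"
  assumes "open U" "open W" "g ` W \<subseteq> U"
    and g': "\<And>w. w \<in> W \<Longrightarrow> (g has_derivative (\<lambda>k. fst k *\<^sub>R a (g w) + snd k *\<^sub>R b (g w))) (at w)"
    and "smooth_on U (\<lambda>q. fst (a q))" "smooth_on U (\<lambda>q. snd (a q))"
      "smooth_on U (\<lambda>q. fst (b q))" "smooth_on U (\<lambda>q. snd (b q))"
  shows "partials_differentiable_on U n Q \<Longrightarrow> partials_differentiable_on W n (\<lambda>w. Q (g w))"
proof (induction n arbitrary: Q)
  case 0
  have "(\<lambda>w. Q (g w)) differentiable at w" if "w \<in> W" for w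
  proof -
    have "g differentiable at w" using g'[OF that] differentiable_def by blast
    moreover have "Q differentiable at (g w)"
      using partials_differentiable_on_imp_differentiable_at[OF assms(1) "0.prems"] assms(3) that by blast
    ultimately show ?thesis using differentiable_chain_at[of g w Q] by (simp add: o_def)
  qed
  then show ?case unfolding partials_differentiable_on_0 by (rule differentiable_at_imp_differentiable_on)
next
  case (Suc n)
  have Q: "partials_differentiable_on U n Q" "partials_differentiable_on U n (pd1 Q)"
    "partials_differentiable_on U n (pd2 Q)" "\<And>q. q \<in> U \<Longrightarrow> Q differentiable at q"
    using Suc.prems partials_differentiable_on_mono[OF Suc.prems, of n]
      partials_differentiable_on_imp_differentiable_at[OF assms(1) Suc.prems]
    unfolding partials_differentiable_on_Suc by simp_all
  have entries: "partials_differentiable_on U n (\<lambda>q. fst (a q))" "partials_differentiable_on U n (\<lambda>q. snd (a q))"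
    "partials_differentiable_on U n (\<lambda>q. fst (b q))" "partials_differentiable_on U n (\<lambda>q. snd (b q))"
    using assms(5-8) unfolding smooth_on_iff_partials_differentiable_on by simp_all
  show ?case
  proof (rule partials_differentiable_on_SucI[OF assms(2)])
    show "(\<lambda>w. Q (g w)) differentiable_on W"
      using partials_differentiable_on_mono[OF Suc.IH[OF Q(1)] le0] by simp
    show "partials_differentiable_on W n (\<lambda>w. pd1 Q (g w) * fst (a (g w)) + pd2 Q (g w) * snd (a (g w)))"
      by (rule Suc.IH[of "\<lambda>q. pd1 Q q * fst (a q) + pd2 Q q * snd (a q)", simplified])
        (intro partials_differentiable_on_add[OF assms(1)] partials_differentiable_on_mult[OF assms(1)] Q entries)
    show "partials_differentiable_on W n (\<lambda>w. pd1 Q (g w) * fst (b (g w)) + pd2 Q (g w) * snd (b (g w)))"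
      by (rule Suc.IH[of "\<lambda>q. pd1 Q q * fst (b q) + pd2 Q q * snd (b q)", simplified])
        (intro partials_differentiable_on_add[OF assms(1)] partials_differentiable_on_mult[OF assms(1)] Q entries)
  next
    fix w assume "w \<in> W"
    then show "pd1 (\<lambda>w. Q (g w)) w = pd1 Q (g w) * fst (a (g w)) + pd2 Q (g w) * snd (a (g w))"
      and "pd2 (\<lambda>w. Q (g w)) w = pd1 Q (g w) * fst (b (g w)) + pd2 Q (g w) * snd (b (g w))"
      using pd_comp_columns[OF Q(4) g'] assms(3) by (simp_all add: image_subset_iff)
  qed
qed

(* The Jacobian columns a, b of g are smooth functions of the image point g w; this is what lets
   the smoothness of an inverse map be bootstrapped from that of the map itself. *)
lemma smooth_on_comp:
  fixes g a b :: "real \<times> real \<Rightarrow> real \<times> real"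
  assumes "open U" "open W" "g ` W \<subseteq> U"
    and "\<And>w. w \<in> W \<Longrightarrow> (g has_derivative (\<lambda>k. fst k *\<^sub>R a (g w) + snd k *\<^sub>R b (g w))) (at w)"
    and "smooth_on U (\<lambda>q. fst (a q))" "smooth_on U (\<lambda>q. snd (a q))"
      "smooth_on U (\<lambda>q. fst (b q))" "smooth_on U (\<lambda>q. snd (b q))"
    and "smooth_on U Q"
  shows "smooth_on W (\<lambda>w. Q (g w))"
  using partials_differentiable_on_comp[OF assms(1-8), where Q=Q] assms(9)
  unfolding smooth_on_iff_partials_differentiable_on by simp

lemma second_difference_mvt:
  fixes f :: "real \<times> real \<Rightarrow> real"
  assumes "h > 0"
    and D: "\<And>z. z \<in> {x..x+h} \<times> {y..y+h} \<Longrightarrow> f differentiable at z \<and> pd1 f differentiable at z"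
  obtains \<xi> \<eta> where "\<xi> \<in> {x..x+h}" "\<eta> \<in> {y..y+h}"
    "f (x+h, y+h) - f (x+h, y) - f (x, y+h) + f (x, y) = h * h * pd2 (pd1 f) (\<xi>, \<eta>)"
proof -
  have "((\<lambda>s. f (s, y+h) - f (s, y)) has_real_derivative pd1 f (s, y+h) - pd1 f (s, y)) (at s)"
    if "x \<le> s" "s \<le> x + h" for s
    using that assms(1) D by (intro DERIV_diff pd1_has_real_derivative) auto
  then obtain \<xi> where \<xi>: "x < \<xi>" "\<xi> < x + h"
    "f (x+h, y+h) - f (x+h, y) - (f (x, y+h) - f (x, y)) = h * (pd1 f (\<xi>, y+h) - pd1 f (\<xi>, y))"
    using MVT2[of x "x+h"] assms(1) by fastforce
  have "((\<lambda>t. pd1 f (\<xi>, t)) has_real_derivative pd2 (pd1 f) (\<xi>, t)) (at t)"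
    if "y \<le> t" "t \<le> y + h" for t
    using that \<xi>(1,2) D by (intro pd2_has_real_derivative) auto
  then obtain \<eta> where \<eta>: "y < \<eta>" "\<eta> < y + h"
    "pd1 f (\<xi>, y+h) - pd1 f (\<xi>, y) = h * pd2 (pd1 f) (\<xi>, \<eta>)"
    using MVT2[of y "y+h"] assms(1) by fastforce
  show ?thesis
    using that[of \<xi> \<eta>] \<xi> \<eta> by (simp add: algebra_simps)
qed

lemma second_difference_mvt_swap:
  fixes f :: "real \<times> real \<Rightarrow> real"
  assumes "h > 0"
    and D: "\<And>z. z \<in> {x..x+h} \<times> {y..y+h} \<Longrightarrow> f differentiable at z \<and> pd2 f differentiable at z"
  obtains \<xi> \<eta> where "\<xi> \<in> {x..x+h}" "\<eta> \<in> {y..y+h}"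
    "f (x+h, y+h) - f (x+h, y) - f (x, y+h) + f (x, y) = h * h * pd1 (pd2 f) (\<xi>, \<eta>)"
proof -
  let ?g = "\<lambda>z. f (prod.swap z)"
  have "?g differentiable at z \<and> pd1 ?g differentiable at z" if "z \<in> {y..y+h} \<times> {x..x+h}" for z
    using D[of "prod.swap z"] that by (auto simp: pd1_swap intro!: differentiable_swap)
  from second_difference_mvt[OF assms(1) this] obtain \<eta> \<xi> where
    "\<eta> \<in> {y..y+h}" "\<xi> \<in> {x..x+h}"
    "?g (y+h, x+h) - ?g (y+h, x) - ?g (y, x+h) + ?g (y, x) = h * h * pd2 (pd1 ?g) (\<eta>, \<xi>)"
    by blast
  then show ?thesis
    using that[of \<xi> \<eta>] by (simp add: pd1_swap pd2_swap algebra_simps)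
qed

(* Both mixed partials are values of the same second difference quotient over a small square. *)
lemma mixed_partials_close:
  fixes f :: "real \<times> real \<Rightarrow> real"
  assumes "open S" "partials_differentiable_on S 2 f" "q \<in> S" "e > 0"
  shows "\<bar>pd2 (pd1 f) q - pd1 (pd2 f) q\<bar> < 2 * e"
proof -
  have D: "f differentiable at z \<and> pd1 f differentiable at z \<and> pd2 f differentiable at z
      \<and> pd2 (pd1 f) differentiable at z \<and> pd1 (pd2 f) differentiable at z" if "z \<in> S" for z
    using assms(2) that differentiable_on_eq_differentiable_at[OF assms(1)]
    by (auto simp: numeral_2_eq_2 partials_differentiable_on_Suc)
  have "isCont (pd2 (pd1 f)) q" "isCont (pd1 (pd2 f)) q"
    using D[OF assms(3)] differentiable_imp_continuous_within by blast+
  then have lim: "(pd2 (pd1 f) \<longlongrightarrow> pd2 (pd1 f) q) (nhds q)" "(pd1 (pd2 f) \<longlongrightarrow> pd1 (pd2 f) q) (nhds q)"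
    unfolding isCont_def tendsto_at_iff_tendsto_nhds .
  have "eventually (\<lambda>z. z \<in> S \<and> dist (pd2 (pd1 f) z) (pd2 (pd1 f) q) < e
      \<and> dist (pd1 (pd2 f) z) (pd1 (pd2 f) q) < e) (nhds q)"
    by (intro eventually_conj eventually_nhds_in_open[OF assms(1,3)] tendstoD[OF lim(1) assms(4)]
        tendstoD[OF lim(2) assms(4)])
  then obtain d where d: "d > 0" "\<And>z. dist z q < d \<Longrightarrow> z \<in> S \<and>
      dist (pd2 (pd1 f) z) (pd2 (pd1 f) q) < e \<and> dist (pd1 (pd2 f) z) (pd1 (pd2 f) q) < e"
    unfolding eventually_nhds_metric by blast
  obtain x y where q: "q = (x, y)" by fastforce
  define h where "h = d / 3"
  have h: "h > 0" using d(1) unfolding h_def by simp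
  have near: "dist z q < d" if "z \<in> {x..x+h} \<times> {y..y+h}" for z
  proof -
    have "dist z q \<le> \<bar>fst z - x\<bar> + \<bar>snd z - y\<bar>"
      using sqrt_sum_squares_le_sum_abs[of "fst z - x" "snd z - y"]
      by (simp add: q dist_prod_def dist_real_def)
    also have "\<dots> < d" using that h_def d(1) by auto
    finally show ?thesis .
  qed
  obtain \<xi> \<eta> where \<xi>\<eta>: "(\<xi>, \<eta>) \<in> {x..x+h} \<times> {y..y+h}"
    "f (x+h, y+h) - f (x+h, y) - f (x, y+h) + f (x, y) = h * h * pd2 (pd1 f) (\<xi>, \<eta>)"
    using second_difference_mvt[OF h] D d(2) near by (metis mem_Sigma_iff)
  obtain \<xi>' \<eta>' where \<xi>\<eta>': "(\<xi>', \<eta>') \<in> {x..x+h} \<times> {y..y+h}"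
    "f (x+h, y+h) - f (x+h, y) - f (x, y+h) + f (x, y) = h * h * pd1 (pd2 f) (\<xi>', \<eta>')"
    using second_difference_mvt_swap[OF h] D d(2) near by (metis mem_Sigma_iff)
  have "pd2 (pd1 f) (\<xi>, \<eta>) = pd1 (pd2 f) (\<xi>', \<eta>')"
    using \<xi>\<eta>(2) \<xi>\<eta>'(2) h by simp
  then show ?thesis
    using d(2)[OF near[OF \<xi>\<eta>(1)]] d(2)[OF near[OF \<xi>\<eta>'(1)]] by (auto simp: dist_real_def abs_less_iff)
qed

lemma pd_mixed_symmetric:
  fixes f :: "real \<times> real \<Rightarrow> real"
  assumes "open S" "partials_differentiable_on S 2 f" "q \<in> S"
  shows "pd2 (pd1 f) q = pd1 (pd2 f) q"
  using mixed_partials_close[OF assms, of "\<bar>pd2 (pd1 f) q - pd1 (pd2 f) q\<bar> / 2"] by fastforce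

lemma pd_graph:
  fixes \<phi> :: "real \<times> real \<Rightarrow> real"
  assumes "\<phi> differentiable at q"
  shows "pd1 (\<lambda>(x, y). (x, y, \<phi> (x, y))) q = (1, 0, pd1 \<phi> q)"
    "pd2 (\<lambda>(x, y). (x, y, \<phi> (x, y))) q = (0, 1, pd2 \<phi> q)"
proof -
  have "(\<lambda>(x, y). (x, y, \<phi> (x, y))) = (\<lambda>z. (fst z, snd z, \<phi> z))"
    by auto
  moreover have "((\<lambda>z. (fst z, snd z, \<phi> z)) has_derivative
      (\<lambda>h. (fst h, snd h, fst h * pd1 \<phi> q + snd h * pd2 \<phi> q))) (at q)"
    by (intro has_derivative_Pair has_derivative_partials[OF assms] bounded_linear_imp_has_derivative
        bounded_linear_fst bounded_linear_snd)
  ultimately have "((\<lambda>(x, y). (x, y, \<phi> (x, y))) has_derivative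
      (\<lambda>h. (fst h, snd h, fst h * pd1 \<phi> q + snd h * pd2 \<phi> q))) (at q)"
    by simp
  from pd_eq_derivative[OF this] show "pd1 (\<lambda>(x, y). (x, y, \<phi> (x, y))) q = (1, 0, pd1 \<phi> q)"
    "pd2 (\<lambda>(x, y). (x, y, \<phi> (x, y))) q = (0, 1, pd2 \<phi> q)" by simp_all
qed

lemma pd_vertical:
  fixes g :: "real \<times> real \<Rightarrow> real"
  assumes "g differentiable at q"
  shows "pd1 (\<lambda>z. (a, b, g z)) q = (0, 0, pd1 g q)" "pd2 (\<lambda>z. (a, b, g z)) q = (0, 0, pd2 g q)"
  using pd_eq_derivative[OF has_derivative_Pair[OF has_derivative_const
        has_derivative_Pair[OF has_derivative_const has_derivative_partials[OF assms]]]]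
  by simp_all

lemma graph_second_partials:
  fixes \<phi> :: "real \<times> real \<Rightarrow> real"
  assumes "open \<Omega>" "partials_differentiable_on \<Omega> 1 \<phi>" "q \<in> \<Omega>"
  defines "X \<equiv> \<lambda>(x, y). (x, y, \<phi> (x, y))"
  shows "pd1 (pd1 X) q = (0, 0, pd1 (pd1 \<phi>) q)" "pd2 (pd1 X) q = (0, 0, pd2 (pd1 \<phi>) q)"
    "pd2 (pd2 X) q = (0, 0, pd2 (pd2 \<phi>) q)"
proof -
  have d: "\<phi> differentiable at z" "pd1 \<phi> differentiable at z" "pd2 \<phi> differentiable at z" if "z \<in> \<Omega>" for z
    using assms(2) that differentiable_on_eq_differentiable_at[OF assms(1)]
    unfolding One_nat_def partials_differentiable_on_Suc partials_differentiable_on_0 by blast+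
  have "pd1 (pd1 X) q = pd1 (\<lambda>z. (1, 0, pd1 \<phi> z)) q"
    by (rule pd1_cong[OF assms(1,3)]) (simp add: X_def pd_graph d)
  moreover have "pd2 (pd1 X) q = pd2 (\<lambda>z. (1, 0, pd1 \<phi> z)) q"
    by (rule pd2_cong[OF assms(1,3)]) (simp add: X_def pd_graph d)
  moreover have "pd2 (pd2 X) q = pd2 (\<lambda>z. (0, 1, pd2 \<phi> z)) q"
    by (rule pd2_cong[OF assms(1,3)]) (simp add: X_def pd_graph d)
  ultimately show "pd1 (pd1 X) q = (0, 0, pd1 (pd1 \<phi>) q)" "pd2 (pd1 X) q = (0, 0, pd2 (pd1 \<phi>) q)"
    "pd2 (pd2 X) q = (0, 0, pd2 (pd2 \<phi>) q)"
    by (simp_all add: pd_vertical d assms(3))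
qed

lemma graph_first_fundamental_det:
  fixes \<phi> :: "real \<times> real \<Rightarrow> real"
  assumes "\<phi> differentiable at q"
  defines "X \<equiv> \<lambda>(x, y). (x, y, \<phi> (x, y))"
  shows "fundE X q * fundG X q - (fundF X q)\<^sup>2 = 1 - (pd1 \<phi> q)\<^sup>2 - (pd2 \<phi> q)\<^sup>2"
  unfolding fundE_def fundF_def fundG_def X_def pd_graph[OF assms(1)] lip_def
  by (simp add: power2_eq_square algebra_simps)

lemma mean_curvature_graph:
  fixes \<phi> :: "real \<times> real \<Rightarrow> real"
  assumes "open \<Omega>" "partials_differentiable_on \<Omega> 1 \<phi>" "q \<in> \<Omega>"
  defines "X \<equiv> \<lambda>(x, y). (x, y, \<phi> (x, y))" and "a \<equiv> pd1 \<phi> q" and "b \<equiv> pd2 \<phi> q"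
  shows "mean_curvature X q =
    ((1 - a\<^sup>2) * pd2 (pd2 \<phi>) q + 2 * a * b * pd2 (pd1 \<phi>) q + (1 - b\<^sup>2) * pd1 (pd1 \<phi>) q)
    / (2 * (1 - a\<^sup>2 - b\<^sup>2) * sqrt \<bar>a\<^sup>2 + b\<^sup>2 - 1\<bar>)"
proof -
  define k where "k = inverse (sqrt \<bar>a\<^sup>2 + b\<^sup>2 - 1\<bar>)"
  have d: "\<phi> differentiable at q"
    using partials_differentiable_on_imp_differentiable_at[OF assms(1,2,3)] .
  have "lcross (pd1 X q) (pd2 X q) = (- a, - b, - 1)"
    unfolding X_def pd_graph[OF d] lcross_def a_def b_def by simp
  moreover have "lip (- a, - b, - 1) (- a, - b, - 1) = a\<^sup>2 + b\<^sup>2 - 1"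
    unfolding lip_def by (simp add: power2_eq_square)
  ultimately have "unit_normal X q = k *\<^sub>R (- a, - b, - 1)"
    unfolding unit_normal_def k_def by (simp add: inverse_eq_divide)
  then have LMN: "fundL X q = k * pd1 (pd1 \<phi>) q" "fundM X q = k * pd2 (pd1 \<phi>) q"
    "fundN X q = k * pd2 (pd2 \<phi>) q"
    unfolding fundL_def fundM_def fundN_def graph_second_partials[OF assms(1-3), folded X_def] lip_def
    by simp_all
  have EFG: "fundE X q = 1 - a\<^sup>2" "fundF X q = - (a * b)" "fundG X q = 1 - b\<^sup>2"
    unfolding fundE_def fundF_def fundG_def X_def pd_graph[OF d] lip_def a_def b_def
    by (simp_all add: power2_eq_square)
  have "fundE X q * fundG X q - (fundF X q)\<^sup>2 = 1 - a\<^sup>2 - b\<^sup>2"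
    using graph_first_fundamental_det[OF d] unfolding X_def a_def b_def .
  moreover have "fundE X q * fundN X q - 2 * fundF X q * fundM X q + fundG X q * fundL X q
      = k * ((1 - a\<^sup>2) * pd2 (pd2 \<phi>) q + 2 * a * b * pd2 (pd1 \<phi>) q + (1 - b\<^sup>2) * pd1 (pd1 \<phi>) q)"
    unfolding EFG LMN by (simp add: algebra_simps)
  ultimately show ?thesis
    unfolding mean_curvature_def k_def by (simp add: divide_inverse inverse_mult_distrib mult_ac)
qed

(* The numerator of the mean curvature of a graph, see mean_curvature_graph. *)
definition minimal_graph_equation_on :: "(real \<times> real) set \<Rightarrow> (real \<times> real \<Rightarrow> real) \<Rightarrow> bool" where
  "minimal_graph_equation_on \<Omega> \<phi> \<longleftrightarrow> (\<forall>q\<in>\<Omega>.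
     (1 - (pd1 \<phi> q)\<^sup>2) * pd2 (pd2 \<phi>) q + 2 * pd1 \<phi> q * pd2 \<phi> q * pd2 (pd1 \<phi>) q
     + (1 - (pd2 \<phi> q)\<^sup>2) * pd1 (pd1 \<phi>) q = 0)"

lemma timelike_graph_gradient:
  fixes \<phi> :: "real \<times> real \<Rightarrow> real"
  assumes "timelike_on \<Omega> (\<lambda>(x, y). (x, y, \<phi> (x, y)))" "q \<in> \<Omega>" "\<phi> differentiable at q"
  shows "(pd1 \<phi> q)\<^sup>2 + (pd2 \<phi> q)\<^sup>2 > 1"
  using assms(1,2) graph_first_fundamental_det[OF assms(3)] unfolding timelike_on_def by fastforce

lemma minimal_graph_equation_on_if_minimal:
  fixes \<phi> :: "real \<times> real \<Rightarrow> real"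
  assumes "open \<Omega>" "partials_differentiable_on \<Omega> 1 \<phi>"
    and "timelike_on \<Omega> (\<lambda>(x, y). (x, y, \<phi> (x, y)))" "minimal_on \<Omega> (\<lambda>(x, y). (x, y, \<phi> (x, y)))"
  shows "minimal_graph_equation_on \<Omega> \<phi>"
  unfolding minimal_graph_equation_on_def
proof
  fix q assume q: "q \<in> \<Omega>"
  have "(pd1 \<phi> q)\<^sup>2 + (pd2 \<phi> q)\<^sup>2 > 1"
    using timelike_graph_gradient[OF assms(3) q]
      partials_differentiable_on_imp_differentiable_at[OF assms(1,2) q] .
  moreover have "mean_curvature (\<lambda>(x, y). (x, y, \<phi> (x, y))) q = 0"
    using assms(4) q unfolding minimal_on_def by blast
  ultimately show "(1 - (pd1 \<phi> q)\<^sup>2) * pd2 (pd2 \<phi>) q + 2 * pd1 \<phi> q * pd2 \<phi> q * pd2 (pd1 \<phi>) q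
     + (1 - (pd2 \<phi> q)\<^sup>2) * pd1 (pd1 \<phi>) q = 0"
    unfolding mean_curvature_graph[OF assms(1,2) q] by simp
qed

lemma minimal_graph_equation_on_subset:
  "minimal_graph_equation_on \<Omega> \<phi> \<Longrightarrow> U \<subseteq> \<Omega> \<Longrightarrow> minimal_graph_equation_on U \<phi>"
  unfolding minimal_graph_equation_on_def by blast

lemma open_vimage_swap:
  fixes S :: "(real \<times> real) set"
  assumes "open S" shows "open (prod.swap -` S)"
  by (rule continuous_open_vimage[OF assms]) (auto simp: prod.swap_def[abs_def] intro!: continuous_intros)

lemma smooth_on_swap:
  assumes "open \<Omega>" "smooth_on \<Omega> f"
  shows "smooth_on (prod.swap -` \<Omega>) (\<lambda>z. f (prod.swap z))"
  unfolding smooth_on_def pd_iter_swap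
proof
  fix bs
  have "open (prod.swap -` \<Omega>)"
    by (rule open_vimage_swap[OF assms(1)])
  moreover have "pd_iter (map Not bs) f differentiable at (prod.swap z)" if "z \<in> prod.swap -` \<Omega>" for z
    using assms that differentiable_on_eq_differentiable_at unfolding smooth_on_def by auto
  ultimately show "(\<lambda>z. pd_iter (map Not bs) f (prod.swap z)) differentiable_on prod.swap -` \<Omega>"
    by (auto simp: differentiable_on_eq_differentiable_at intro: differentiable_swap)
qed

lemma minimal_graph_equation_on_swap:
  assumes "open \<Omega>" "partials_differentiable_on \<Omega> 2 \<phi>" "minimal_graph_equation_on \<Omega> \<phi>"
  shows "minimal_graph_equation_on (prod.swap -` \<Omega>) (\<lambda>z. \<phi> (prod.swap z))"
  unfolding minimal_graph_equation_on_def pd1_swap pd2_swap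
proof
  fix z assume "z \<in> prod.swap -` \<Omega>"
  then have q: "prod.swap z \<in> \<Omega>" by simp
  have "(1 - (pd1 \<phi> (prod.swap z))\<^sup>2) * pd2 (pd2 \<phi>) (prod.swap z)
      + 2 * pd1 \<phi> (prod.swap z) * pd2 \<phi> (prod.swap z) * pd2 (pd1 \<phi>) (prod.swap z)
      + (1 - (pd2 \<phi> (prod.swap z))\<^sup>2) * pd1 (pd1 \<phi>) (prod.swap z) = 0"
    using assms(3) q unfolding minimal_graph_equation_on_def by blast
  then show "(1 - (pd2 \<phi> (prod.swap z))\<^sup>2) * pd1 (pd1 \<phi>) (prod.swap z)
      + 2 * pd2 \<phi> (prod.swap z) * pd1 \<phi> (prod.swap z) * pd1 (pd2 \<phi>) (prod.swap z)
      + (1 - (pd1 \<phi> (prod.swap z))\<^sup>2) * pd2 (pd2 \<phi>) (prod.swap z) = 0"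
    using pd_mixed_symmetric[OF assms(1,2) q] by (simp add: algebra_simps)
qed

lemma graph_image_swap:
  fixes \<phi> \<psi> :: "real \<times> real \<Rightarrow> real"
  assumes "(\<lambda>(x, y). (x, y, \<phi> (prod.swap (x, y)))) ` U = (\<lambda>(x, z). (x, \<psi> (x, z), z)) ` W"
  shows "(\<lambda>(x, y). (x, y, \<phi> (x, y))) ` (prod.swap -` U) = (\<lambda>(y, z). (\<psi> (y, z), y, z)) ` W"
proof -
  have "prod.swap -` U = prod.swap ` U"
    by (force simp: image_iff)
  then show ?thesis
    using arg_cong[where f="image (\<lambda>(a, b, c). (b, a, c))", OF assms]
    by (simp add: image_image case_prod_beta prod.swap_def)
qed

lemma inj_on_graph_map:
  fixes \<phi> :: "real \<times> real \<Rightarrow> real"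
  assumes "convex U" "\<And>q. q \<in> U \<Longrightarrow> \<phi> differentiable at q" "\<And>q. q \<in> U \<Longrightarrow> pd2 \<phi> q \<noteq> 0"
  shows "inj_on (\<lambda>q. (fst q, \<phi> q)) U"
proof -
  have key: "\<phi> (x, y1) \<noteq> \<phi> (x, y2)" if "(x, y1) \<in> U" "(x, y2) \<in> U" "y1 < y2" for x y1 y2
  proof -
    have segment: "(x, t) \<in> U" if "y1 \<le> t" "t \<le> y2" for t
    proof -
      define u where "u = (t - y1) / (y2 - y1)"
      have "u * (y2 - y1) = t - y1"
        using \<open>y1 < y2\<close> by (simp add: u_def)
      then have "(1 - u) * y1 + u * y2 = t"
        by (simp add: algebra_simps)
      then have "(x, t) = (1 - u) *\<^sub>R (x, y1) + u *\<^sub>R (x, y2)"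
        by (simp add: algebra_simps)
      moreover have "0 \<le> u" "u \<le> 1"
        using that \<open>y1 < y2\<close> by (simp_all add: u_def field_simps)
      ultimately have "(x, t) \<in> closed_segment (x, y1) (x, y2)"
        unfolding in_segment by blast
      then show ?thesis
        using closed_segment_subset[OF \<open>(x, y1) \<in> U\<close> \<open>(x, y2) \<in> U\<close> assms(1)] by blast
    qed
    then obtain \<eta> where \<eta>: "y1 < \<eta>" "\<eta> < y2" "\<phi> (x, y2) - \<phi> (x, y1) = (y2 - y1) * pd2 \<phi> (x, \<eta>)"
      using MVT2[of y1 y2 "\<lambda>t. \<phi> (x, t)" "\<lambda>t. pd2 \<phi> (x, t)"] \<open>y1 < y2\<close>
        pd2_has_real_derivative assms(2) by blast
    moreover have "pd2 \<phi> (x, \<eta>) \<noteq> 0"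
      using assms(3) segment \<eta>(1,2) by simp
    ultimately show ?thesis
      using \<open>y1 < y2\<close> by auto
  qed
  show ?thesis
  proof (rule inj_onI)
    fix q q' assume "q \<in> U" "q' \<in> U" "(fst q, \<phi> q) = (fst q', \<phi> q')"
    moreover obtain x y x' y' where "q = (x, y)" "q' = (x', y')" by fastforce
    ultimately show "q = q'"
      using key[of x y y'] key[of x y' y] by (cases y y' rule: linorder_cases) auto
  qed
qed

(* The derivative of g is the inverse of the Jacobian [[1, 0], [phi_x, phi_y]]. *)
lemma local_graph_inverse:
  fixes \<phi> :: "real \<times> real \<Rightarrow> real"
  assumes "open U" "convex U" "\<And>q. q \<in> U \<Longrightarrow> \<phi> differentiable at q" "\<And>q. q \<in> U \<Longrightarrow> pd2 \<phi> q \<noteq> 0"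
  defines "F \<equiv> \<lambda>q. (fst q, \<phi> q)"
  obtains g where "open (F ` U)" "homeomorphism U (F ` U) F g"
    "\<And>w. w \<in> F ` U \<Longrightarrow> (g has_derivative
       (\<lambda>k. fst k *\<^sub>R (1, - pd1 \<phi> (g w) / pd2 \<phi> (g w)) + snd k *\<^sub>R (0, 1 / pd2 \<phi> (g w)))) (at w)"
proof -
  have contF: "continuous_on U F"
    unfolding F_def using assms(3)
    by (intro continuous_on_Pair continuous_on_fst continuous_on_id differentiable_imp_continuous_on
        differentiable_at_imp_differentiable_on) auto
  have injF: "inj_on F U"
    unfolding F_def by (rule inj_on_graph_map[OF assms(2-4)])
  obtain g where hom: "homeomorphism U (F ` U) F g"
    using invariance_of_domain_homeomorphism[OF assms(1) contF _ injF] by auto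
  have openW: "open (F ` U)"
    using invariance_of_domain[OF contF assms(1) injF] .
  have g': "(g has_derivative
      (\<lambda>k. fst k *\<^sub>R (1, - pd1 \<phi> q / pd2 \<phi> q) + snd k *\<^sub>R (0, 1 / pd2 \<phi> q))) (at (F q))"
    if "q \<in> U" for q
  proof (rule has_derivative_inverse_dieudonne[OF assms(1) openW contF _ _ that])
    show "continuous_on (F ` U) g" "\<And>x. x \<in> U \<Longrightarrow> g (F x) = x"
      using hom unfolding homeomorphism_def by auto
    show "(F has_derivative (\<lambda>h. (fst h, fst h * pd1 \<phi> q + snd h * pd2 \<phi> q))) (at q)"
      unfolding F_def
      by (intro has_derivative_Pair has_derivative_partials assms(3) that
          bounded_linear_imp_has_derivative bounded_linear_fst)
    show "bounded_linear (\<lambda>k. fst k *\<^sub>R (1, - pd1 \<phi> q / pd2 \<phi> q) + snd k *\<^sub>R (0, 1 / pd2 \<phi> q))"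
      by (intro bounded_linear_add bounded_linear_compose[OF bounded_linear_scaleR_left bounded_linear_fst]
          bounded_linear_compose[OF bounded_linear_scaleR_left bounded_linear_snd])
    show "(\<lambda>k. fst k *\<^sub>R (1, - pd1 \<phi> q / pd2 \<phi> q) + snd k *\<^sub>R (0, 1 / pd2 \<phi> q))
        \<circ> (\<lambda>h. (fst h, fst h * pd1 \<phi> q + snd h * pd2 \<phi> q)) = id"
      using assms(4)[OF that] by (auto simp: fun_eq_iff field_simps)
  qed
  show ?thesis
  proof (rule that[OF openW hom])
    fix w assume "w \<in> F ` U"
    then obtain q where "q \<in> U" "w = F q" by blast
    moreover have "g (F q) = q" using hom \<open>q \<in> U\<close> unfolding homeomorphism_def by auto
    ultimately show "(g has_derivative
       (\<lambda>k. fst k *\<^sub>R (1, - pd1 \<phi> (g w) / pd2 \<phi> (g w)) + snd k *\<^sub>R (0, 1 / pd2 \<phi> (g w)))) (at w)"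
      using g' by simp
  qed
qed

lemma pd_comp_graph_inverse:
  fixes \<phi> Q :: "real \<times> real \<Rightarrow> real" and g :: "real \<times> real \<Rightarrow> real \<times> real"
  assumes "(g has_derivative
      (\<lambda>k. fst k *\<^sub>R (1, - pd1 \<phi> (g w) / pd2 \<phi> (g w)) + snd k *\<^sub>R (0, 1 / pd2 \<phi> (g w)))) (at w)"
    and "Q differentiable at (g w)"
  shows "pd1 (\<lambda>w. Q (g w)) w = pd1 Q (g w) - pd1 \<phi> (g w) / pd2 \<phi> (g w) * pd2 Q (g w)"
    "pd2 (\<lambda>w. Q (g w)) w = pd2 Q (g w) / pd2 \<phi> (g w)"
  using pd_comp_columns[OF assms(2,1)] by simp_all

(* Left-hand side: the Born-Infeld expression at the partials of psi from graph_inverse_partials. *)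
lemma born_infeld_inverse_identity:
  fixes a b r s t :: real
  assumes "b \<noteq> 0"
  shows "(1 - (1 / b)\<^sup>2) * ((- r * b + a * s) / b\<^sup>2 - a / b * ((- s * b + a * t) / b\<^sup>2))
      + 2 * (- a / b) * (1 / b) * ((- s * b + a * t) / b\<^sup>2 / b)
      - (1 + (- a / b)\<^sup>2) * (- t / b\<^sup>2 / b)
      = ((1 - a\<^sup>2) * t + 2 * a * b * s + (1 - b\<^sup>2) * r) / b ^ 3"
  using assms by (simp add: field_simps power2_eq_square power3_eq_cube)

lemma graph_inverse_partials:
  fixes \<phi> :: "real \<times> real \<Rightarrow> real" and g :: "real \<times> real \<Rightarrow> real \<times> real"
  assumes "open U" "partials_differentiable_on U 2 \<phi>" "\<And>q. q \<in> U \<Longrightarrow> pd2 \<phi> q \<noteq> 0"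
    and "open W" "g ` W \<subseteq> U"
    and g': "\<And>w. w \<in> W \<Longrightarrow> (g has_derivative
      (\<lambda>k. fst k *\<^sub>R (1, - pd1 \<phi> (g w) / pd2 \<phi> (g w)) + snd k *\<^sub>R (0, 1 / pd2 \<phi> (g w)))) (at w)"
    and w: "w \<in> W"
  defines "\<psi> \<equiv> \<lambda>w. snd (g w)"
    and "a \<equiv> pd1 \<phi> (g w)" and "b \<equiv> pd2 \<phi> (g w)" and "r \<equiv> pd1 (pd1 \<phi>) (g w)"
    and "s \<equiv> pd2 (pd1 \<phi>) (g w)" and "t \<equiv> pd2 (pd2 \<phi>) (g w)"
  shows "pd1 \<psi> w = - a / b" "pd2 \<psi> w = 1 / b"
    "pd1 (pd1 \<psi>) w = (- r * b + a * s) / b\<^sup>2 - a / b * ((- s * b + a * t) / b\<^sup>2)"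
    "pd2 (pd1 \<psi>) w = (- s * b + a * t) / b\<^sup>2 / b"
    "pd2 (pd2 \<psi>) w = - t / b\<^sup>2 / b"
proof -
  have q: "g w \<in> U" using w assms(5) by blast
  have b: "b \<noteq> 0" using assms(3)[OF q] unfolding b_def .
  have d: "\<phi> differentiable at (g w)" "pd1 \<phi> differentiable at (g w)" "pd2 \<phi> differentiable at (g w)"
    using assms(2) q differentiable_on_eq_differentiable_at[OF assms(1)]
    by (auto simp: numeral_2_eq_2 partials_differentiable_on_Suc)
  have s: "pd1 (pd2 \<phi>) (g w) = s"
    using pd_mixed_symmetric[OF assms(1,2) q] unfolding s_def by simp
  have \<psi>': "pd1 \<psi> w' = - pd1 \<phi> (g w') / pd2 \<phi> (g w')" "pd2 \<psi> w' = 1 / pd2 \<phi> (g w')"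
    if "w' \<in> W" for w'
    using pd_comp_graph_inverse[OF g'[OF that] bounded_linear_imp_differentiable[OF bounded_linear_snd]]
    unfolding \<psi>_def by simp_all
  then show "pd1 \<psi> w = - a / b" "pd2 \<psi> w = 1 / b"
    using w unfolding a_def b_def by simp_all
  have "pd1 (pd1 \<psi>) w = pd1 (\<lambda>w. - pd1 \<phi> (g w) / pd2 \<phi> (g w)) w"
    by (rule pd1_cong[OF assms(4) w]) (simp add: \<psi>')
  also have "\<dots> = (- r * b + a * s) / b\<^sup>2 - a / b * ((- s * b + a * t) / b\<^sup>2)"
    using pd_comp_graph_inverse(1)[OF g'[OF w], of "\<lambda>q. - pd1 \<phi> q / pd2 \<phi> q"] d b s
    by (simp add: pd_divide pd_uminus a_def b_def r_def s_def t_def) (simp add: field_simps)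
  finally show "pd1 (pd1 \<psi>) w = (- r * b + a * s) / b\<^sup>2 - a / b * ((- s * b + a * t) / b\<^sup>2)" .
  have "pd2 (pd1 \<psi>) w = pd2 (\<lambda>w. - pd1 \<phi> (g w) / pd2 \<phi> (g w)) w"
    by (rule pd2_cong[OF assms(4) w]) (simp add: \<psi>')
  also have "\<dots> = (- s * b + a * t) / b\<^sup>2 / b"
    using pd_comp_graph_inverse(2)[OF g'[OF w], of "\<lambda>q. - pd1 \<phi> q / pd2 \<phi> q"] d b
    by (simp add: pd_divide pd_uminus a_def b_def s_def t_def) (simp add: field_simps)
  finally show "pd2 (pd1 \<psi>) w = (- s * b + a * t) / b\<^sup>2 / b" .
  have "pd2 (pd2 \<psi>) w = pd2 (\<lambda>w. 1 / pd2 \<phi> (g w)) w"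
    by (rule pd2_cong[OF assms(4) w]) (simp add: \<psi>')
  also have "\<dots> = - t / b\<^sup>2 / b"
    using pd_comp_graph_inverse(2)[OF g'[OF w], of "\<lambda>q. 1 / pd2 \<phi> q"] d b
    by (simp add: pd_divide b_def t_def)
  finally show "pd2 (pd2 \<psi>) w = - t / b\<^sup>2 / b" .
qed

lemma born_infeld_on_graph_inverse:
  fixes \<phi> :: "real \<times> real \<Rightarrow> real" and g :: "real \<times> real \<Rightarrow> real \<times> real"
  assumes "open U" "partials_differentiable_on U 2 \<phi>" "minimal_graph_equation_on U \<phi>"
    and "\<And>q. q \<in> U \<Longrightarrow> pd2 \<phi> q \<noteq> 0"
    and "open W" "g ` W \<subseteq> U"
    and "\<And>w. w \<in> W \<Longrightarrow> (g has_derivative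
      (\<lambda>k. fst k *\<^sub>R (1, - pd1 \<phi> (g w) / pd2 \<phi> (g w)) + snd k *\<^sub>R (0, 1 / pd2 \<phi> (g w)))) (at w)"
  shows "born_infeld_on W (\<lambda>w. snd (g w))"
  unfolding born_infeld_on_def
proof
  fix w assume w: "w \<in> W"
  then have "g w \<in> U" using assms(6) by blast
  then show "(1 - (pd2 (\<lambda>w. snd (g w)) w)\<^sup>2) * pd1 (pd1 (\<lambda>w. snd (g w))) w
      + 2 * pd1 (\<lambda>w. snd (g w)) w * pd2 (\<lambda>w. snd (g w)) w * pd2 (pd1 (\<lambda>w. snd (g w))) w
      - (1 + (pd1 (\<lambda>w. snd (g w)) w)\<^sup>2) * pd2 (pd2 (\<lambda>w. snd (g w))) w = 0"
    using assms(3,4) graph_inverse_partials[OF assms(1,2,4-7) w]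
      born_infeld_inverse_identity[of "pd2 \<phi> (g w)"]
    unfolding minimal_graph_equation_on_def by simp
qed

lemma graph_image_eq_inverse:
  fixes \<phi> :: "real \<times> real \<Rightarrow> real"
  assumes "homeomorphism U W (\<lambda>q. (fst q, \<phi> q)) g"
  shows "(\<lambda>(x, y). (x, y, \<phi> (x, y))) ` U = (\<lambda>(x, z). (x, snd (g (x, z)), z)) ` W"
proof -
  have U: "U = g ` W" and g: "\<And>w. w \<in> W \<Longrightarrow> fst (g w) = fst w \<and> \<phi> (g w) = snd w"
    using assms unfolding homeomorphism_def by (auto simp: prod_eq_iff)
  have "(\<lambda>(x, y). (x, y, \<phi> (x, y))) ` U = (\<lambda>w. (fst (g w), snd (g w), \<phi> (g w))) ` W"
    unfolding U image_image by (simp add: case_prod_beta)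
  also have "\<dots> = (\<lambda>(x, z). (x, snd (g (x, z)), z)) ` W"
    by (rule image_cong) (auto simp: g)
  finally show ?thesis .
qed

lemma born_infeld_graph_near:
  fixes \<phi> :: "real \<times> real \<Rightarrow> real"
  assumes "open \<Omega>" "smooth_on \<Omega> \<phi>" "minimal_graph_equation_on \<Omega> \<phi>" "p \<in> \<Omega>" "pd2 \<phi> p \<noteq> 0"
  shows "\<exists>U. open U \<and> p \<in> U \<and> U \<subseteq> \<Omega> \<and>
           (\<exists>W \<psi>. open W \<and> smooth_on W \<psi> \<and> born_infeld_on W \<psi> \<and>
              (\<lambda>(x, y). (x, y, \<phi> (x, y))) ` U = (\<lambda>(x, z). (x, \<psi> (x, z), z)) ` W)"
proof -
  have "\<phi> differentiable_on \<Omega>" "pd2 \<phi> differentiable_on \<Omega>"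
    using spec[OF assms(2)[unfolded smooth_on_def], of "[]"]
      spec[OF assms(2)[unfolded smooth_on_def], of "[False]"] by simp_all
  then have d: "\<phi> differentiable at q" "pd2 \<phi> differentiable at q" if "q \<in> \<Omega>" for q
    using that differentiable_on_eq_differentiable_at[OF assms(1)] by blast+
  have "isCont (pd2 \<phi>) p"
    using d(2)[OF assms(4)] differentiable_imp_continuous_within by blast
  then have "eventually (\<lambda>q. pd2 \<phi> q \<noteq> 0) (nhds p)"
    unfolding isCont_def tendsto_at_iff_tendsto_nhds by (rule tendsto_imp_eventually_ne) (rule assms(5))
  then have "eventually (\<lambda>q. q \<in> \<Omega> \<and> pd2 \<phi> q \<noteq> 0) (nhds p)"
    by (rule eventually_conj[OF eventually_nhds_in_open[OF assms(1,4)]])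
  then obtain d where "d > 0" and near: "\<And>q. dist q p < d \<Longrightarrow> q \<in> \<Omega> \<and> pd2 \<phi> q \<noteq> 0"
    unfolding eventually_nhds_metric by blast
  define U where "U = ball p d"
  have U: "open U" "convex U" "p \<in> U" "U \<subseteq> \<Omega>" and U_pd2: "\<And>q. q \<in> U \<Longrightarrow> pd2 \<phi> q \<noteq> 0"
    using \<open>d > 0\<close> near unfolding U_def by (auto simp: dist_commute)
  have U_d: "\<And>q. q \<in> U \<Longrightarrow> \<phi> differentiable at q"
    using d(1) U(4) by blast
  have smooth_U: "smooth_on U \<phi>"
    using smooth_on_subset[OF assms(2) U(4)] .
  let ?F = "\<lambda>q. (fst q, \<phi> q)"
  obtain g where W: "open (?F ` U)" and hom: "homeomorphism U (?F ` U) ?F g"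
    and g': "\<And>w. w \<in> ?F ` U \<Longrightarrow> (g has_derivative
       (\<lambda>k. fst k *\<^sub>R (1, - pd1 \<phi> (g w) / pd2 \<phi> (g w)) + snd k *\<^sub>R (0, 1 / pd2 \<phi> (g w)))) (at w)"
    using local_graph_inverse[OF U(1,2) U_d U_pd2] by blast
  have gW: "g ` ?F ` U \<subseteq> U"
    using hom unfolding homeomorphism_def by blast
  have smooth: "smooth_on (?F ` U) (\<lambda>w. snd (g w))"
  proof (rule smooth_on_comp[OF U(1) W gW g'])
    show "smooth_on U (\<lambda>q. snd (1 :: real, - pd1 \<phi> q / pd2 \<phi> q))"
      using smooth_on_divide[OF U(1) smooth_on_uminus[OF U(1) smooth_on_pd1[OF smooth_U]]
          smooth_on_pd2[OF smooth_U] U_pd2] by simp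
    show "smooth_on U (\<lambda>q. snd (0 :: real, 1 / pd2 \<phi> q))"
      using smooth_on_divide[OF U(1) smooth_on_const smooth_on_pd2[OF smooth_U] U_pd2] by simp
  qed (simp_all add: smooth_on_const smooth_on_iff_partials_differentiable_on partials_differentiable_on_snd)
  have "partials_differentiable_on U 2 \<phi>"
    using smooth_U smooth_on_iff_partials_differentiable_on by blast
  from born_infeld_on_graph_inverse[OF U(1) this minimal_graph_equation_on_subset[OF assms(3) U(4)]
      U_pd2 W gW g']
  have BI: "born_infeld_on (?F ` U) (\<lambda>w. snd (g w))" .
  have "\<exists>W \<psi>. open W \<and> smooth_on W \<psi> \<and> born_infeld_on W \<psi> \<and>
      (\<lambda>(x, y). (x, y, \<phi> (x, y))) ` U = (\<lambda>(x, z). (x, \<psi> (x, z), z)) ` W"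
    by (rule exI[where x="?F ` U"], rule exI[where x="\<lambda>w. snd (g w)"])
      (use W smooth BI graph_image_eq_inverse[OF hom] in simp)
  then show ?thesis
    using U(1,3,4) by blast
qed

lemma born_infeld_graph_near_swap:
  fixes \<phi> :: "real \<times> real \<Rightarrow> real"
  assumes "open \<Omega>" "smooth_on \<Omega> \<phi>" "minimal_graph_equation_on \<Omega> \<phi>" "p \<in> \<Omega>" "pd1 \<phi> p \<noteq> 0"
  shows "\<exists>U. open U \<and> p \<in> U \<and> U \<subseteq> \<Omega> \<and>
           (\<exists>W \<psi>. open W \<and> smooth_on W \<psi> \<and> born_infeld_on W \<psi> \<and>
              (\<lambda>(x, y). (x, y, \<phi> (x, y))) ` U = (\<lambda>(y, z). (\<psi> (y, z), y, z)) ` W)"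
proof -
  have "partials_differentiable_on \<Omega> 2 \<phi>"
    using assms(2) smooth_on_iff_partials_differentiable_on by blast
  note swapped = open_vimage_swap[OF assms(1)] smooth_on_swap[OF assms(1,2)]
    minimal_graph_equation_on_swap[OF assms(1) this assms(3)]
  have "prod.swap p \<in> prod.swap -` \<Omega>" "pd2 (\<lambda>z. \<phi> (prod.swap z)) (prod.swap p) \<noteq> 0"
    using assms(4,5) by (simp_all add: pd2_swap)
  from born_infeld_graph_near[OF swapped this] obtain U W \<psi> where
    U: "open U" "prod.swap p \<in> U" "U \<subseteq> prod.swap -` \<Omega>"
    and W: "open W" "smooth_on W \<psi>" "born_infeld_on W \<psi>"
    and image: "(\<lambda>(x, y). (x, y, \<phi> (prod.swap (x, y)))) ` U = (\<lambda>(x, z). (x, \<psi> (x, z), z)) ` W"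
    by blast
  have "open (prod.swap -` U)" "p \<in> prod.swap -` U" "prod.swap -` U \<subseteq> \<Omega>"
    using open_vimage_swap[OF U(1)] U(2,3) by auto
  with W graph_image_swap[OF image] show ?thesis
    by blast
qed

theorem lemma2p1:
  fixes \<phi> :: "real \<times> real \<Rightarrow> real" and \<Omega> :: "(real \<times> real) set"
  assumes "open \<Omega>"
    and "smooth_on \<Omega> \<phi>"
    and "timelike_on \<Omega> (\<lambda>(x, y). (x, y, \<phi> (x, y)))"
    and "minimal_on \<Omega> (\<lambda>(x, y). (x, y, \<phi> (x, y)))"
  shows "\<forall>p\<in>\<Omega>. \<exists>U. open U \<and> p \<in> U \<and> U \<subseteq> \<Omega> \<and>
           (\<exists>W \<psi>. open W \<and> smooth_on W \<psi> \<and> born_infeld_on W \<psi> \<and>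
              ((\<lambda>(x, y). (x, y, \<phi> (x, y))) ` U = (\<lambda>(x, z). (x, \<psi> (x, z), z)) ` W
               \<or> (\<lambda>(x, y). (x, y, \<phi> (x, y))) ` U = (\<lambda>(y, z). (\<psi> (y, z), y, z)) ` W))"
proof
  fix p assume p: "p \<in> \<Omega>"
  have C1: "partials_differentiable_on \<Omega> 1 \<phi>"
    using assms(2) smooth_on_iff_partials_differentiable_on by blast
  have eq: "minimal_graph_equation_on \<Omega> \<phi>"
    by (rule minimal_graph_equation_on_if_minimal[OF assms(1) C1 assms(3,4)])
  have "(pd1 \<phi> p)\<^sup>2 + (pd2 \<phi> p)\<^sup>2 > 1"
    by (rule timelike_graph_gradient[OF assms(3) p
          partials_differentiable_on_imp_differentiable_at[OF assms(1) C1 p]])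
  then consider "pd2 \<phi> p \<noteq> 0" | "pd1 \<phi> p \<noteq> 0"
    by force
  then show "\<exists>U. open U \<and> p \<in> U \<and> U \<subseteq> \<Omega> \<and>
           (\<exists>W \<psi>. open W \<and> smooth_on W \<psi> \<and> born_infeld_on W \<psi> \<and>
              ((\<lambda>(x, y). (x, y, \<phi> (x, y))) ` U = (\<lambda>(x, z). (x, \<psi> (x, z), z)) ` W
               \<or> (\<lambda>(x, y). (x, y, \<phi> (x, y))) ` U = (\<lambda>(y, z). (\<psi> (y, z), y, z)) ` W))"
  proof cases
    case 1
    from born_infeld_graph_near[OF assms(1,2) eq p this] show ?thesis by blast
  next
    case 2
    from born_infeld_graph_near_swap[OF assms(1,2) eq p this] show ?thesis by blast
  qed
qed

end
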